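(* For any positive integers $d,T,B$ with $d\le T$ and $d\le B$, there exists an oblivious adversary using a ground truth $\theta^*\in\mathbb{R}^d$ with $\|\theta^*\|_2\le\sqrt d$ and $|\langle\theta^*,x_t\rangle|\le 1$ for all $t$ (with $\|x_t\|_2\le 1$ and noise independent, zero-mean, sub-Gaussian with variance proxy $1/4$), such that every online active learning algorithm with label budget $B$ has expected regret at least $c\,dT/B$ for an absolute constant $c>0$.
   Context: Online active regression protocol: an oblivious adversary fixes $\theta^*\in\mathbb{R}^d$ and inputs $x_1,\dots,x_T$ in advance; labels are $y_t=\langle\theta^*,x_t\rangle+\xi_t$ with independent zero-mean noise. At each round the learner sees $x_t$, predicts $\hat y_t$ using only previously observed information, then decides whether to query $y_t$. Label budget $B$ means the number of queries is at most $B$. Regret: $R=\sum_{t=1}^T(\hat y_t-\langle\theta^*,x_t\rangle)^2$. *)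

theory Defs
  imports "HOL-Probability.Probability"
begin

text \<open>Vectors of R^d are represented as functions nat => real, only coordinates i < d matter.
  Input sequences are functions from the round index (0-based, rounds 0..T-1) to vectors.\<close>

type_synonym vec = "nat \<Rightarrow> real"
type_synonym inputs = "nat \<Rightarrow> vec"

definition ip :: "nat \<Rightarrow> vec \<Rightarrow> vec \<Rightarrow> real" where
  "ip d u v = (\<Sum>i<d. u i * v i)"

definition vnorm :: "nat \<Rightarrow> vec \<Rightarrow> real" where
  "vnorm d v = sqrt (\<Sum>i<d. (v i)^2)"

text \<open>A (possibly randomized) learner: a seed r (drawn once from the learner's seed
  distribution), a prediction rule and a query rule.  Both rules receive the round t, the
  inputs observed so far (rounds \<le> t, coordinates < d) and the labels observed so far
  (Some y for queried past rounds, None otherwise).\<close>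

type_synonym learner_pred = "real \<Rightarrow> nat \<Rightarrow> inputs \<Rightarrow> (nat \<Rightarrow> real option) \<Rightarrow> real"
type_synonym learner_query = "real \<Rightarrow> nat \<Rightarrow> inputs \<Rightarrow> (nat \<Rightarrow> real option) \<Rightarrow> bool"

definition seen_inputs :: "nat \<Rightarrow> inputs \<Rightarrow> nat \<Rightarrow> inputs" where
  "seen_inputs d xs t = (\<lambda>s i. if s \<le> t \<and> i < d then xs s i else 0)"

definition seen_labels :: "nat set \<Rightarrow> (nat \<Rightarrow> real) \<Rightarrow> nat \<Rightarrow> real option" where
  "seen_labels Q y = (\<lambda>s. if s \<in> Q then Some (y s) else None)"

fun queried :: "nat \<Rightarrow> learner_query \<Rightarrow> real \<Rightarrow> inputs \<Rightarrow> (nat \<Rightarrow> real) \<Rightarrow> nat \<Rightarrow> nat set" where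
  "queried d q r xs y 0 = {}"
| "queried d q r xs y (Suc t) =
     (if q r t (seen_inputs d xs t) (seen_labels (queried d q r xs y t) y)
      then insert t (queried d q r xs y t) else queried d q r xs y t)"

definition prediction ::
  "nat \<Rightarrow> learner_pred \<Rightarrow> learner_query \<Rightarrow> real \<Rightarrow> inputs \<Rightarrow> (nat \<Rightarrow> real) \<Rightarrow> nat \<Rightarrow> real" where
  "prediction d p q r xs y t = p r t (seen_inputs d xs t) (seen_labels (queried d q r xs y t) y)"

definition labels :: "nat \<Rightarrow> vec \<Rightarrow> inputs \<Rightarrow> (nat \<Rightarrow> real) \<Rightarrow> nat \<Rightarrow> real" where
  "labels d \<theta> xs \<xi> t = ip d \<theta> (xs t) + \<xi> t"

definition regret ::
  "nat \<Rightarrow> nat \<Rightarrow> learner_pred \<Rightarrow> learner_query \<Rightarrow> real \<Rightarrow> vec \<Rightarrow> inputs \<Rightarrow> (nat \<Rightarrow> real) \<Rightarrow> real" where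
  "regret d T p q r \<theta> xs \<xi> =
     (\<Sum>t<T. (prediction d p q r xs (labels d \<theta> xs \<xi>) t - ip d \<theta> (xs t))^2)"

definition respects_budget :: "nat \<Rightarrow> nat \<Rightarrow> nat \<Rightarrow> learner_query \<Rightarrow> bool" where
  "respects_budget d T B q = (\<forall>r xs y. card (queried d q r xs y T) \<le> B)"

text \<open>The learner's rules are measurable in its random seed (needed for the expectation).\<close>
definition seed_measurable :: "real measure \<Rightarrow> learner_pred \<Rightarrow> learner_query \<Rightarrow> bool" where
  "seed_measurable S p q =
     (\<forall>t X Y. (\<lambda>r. p r t X Y) \<in> borel_measurable S \<and> {r \<in> space S. q r t X Y} \<in> sets S)"

definition zero_mean_pmf :: "real pmf \<Rightarrow> bool" where
  "zero_mean_pmf N = (integrable (measure_pmf N) (\<lambda>x. x) \<and> measure_pmf.expectation N (\<lambda>x. x) = 0)"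

definition sub_gaussian_pmf :: "real pmf \<Rightarrow> real \<Rightarrow> bool" where
  "sub_gaussian_pmf N \<sigma>2 =
     (\<forall>l::real. integrable (measure_pmf N) (\<lambda>x. exp (l * x)) \<and>
        measure_pmf.expectation N (\<lambda>x. exp (l * x)) \<le> exp (l^2 * \<sigma>2 / 2))"

text \<open>A randomized oblivious adversary: a distribution P over instances (theta, x_0..x_{T-1});
  each instance comes with noise distributions N theta xs t for the rounds t < T.\<close>
definition valid_adversary ::
  "nat \<Rightarrow> nat \<Rightarrow> (vec \<times> inputs) pmf \<Rightarrow> (vec \<Rightarrow> inputs \<Rightarrow> nat \<Rightarrow> real pmf) \<Rightarrow> bool" where
  "valid_adversary d T P N =
     (\<forall>(\<theta>, xs) \<in> set_pmf P. vnorm d \<theta> \<le> sqrt (real d) \<and>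
        (\<forall>t<T. vnorm d (xs t) \<le> 1 \<and> \<bar>ip d \<theta> (xs t)\<bar> \<le> 1 \<and>
               zero_mean_pmf (N \<theta> xs t) \<and> sub_gaussian_pmf (N \<theta> xs t) (1/4)))"

definition outcome ::
  "nat \<Rightarrow> (vec \<times> inputs) pmf \<Rightarrow> (vec \<Rightarrow> inputs \<Rightarrow> nat \<Rightarrow> real pmf) \<Rightarrow> (vec \<times> inputs \<times> (nat \<Rightarrow> real)) pmf" where
  "outcome T P N =
     bind_pmf P (\<lambda>(\<theta>, xs). map_pmf (\<lambda>\<xi>. (\<theta>, xs, \<xi>)) (Pi_pmf {..<T} 0 (N \<theta> xs)))"

definition expected_regret ::
  "nat \<Rightarrow> nat \<Rightarrow> (vec \<times> inputs) pmf \<Rightarrow> (vec \<Rightarrow> inputs \<Rightarrow> nat \<Rightarrow> real pmf) \<Rightarrow> real measure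
   \<Rightarrow> learner_pred \<Rightarrow> learner_query \<Rightarrow> ennreal" where
  "expected_regret d T P N S p q =
     (\<integral>\<^sup>+ r. (\<integral>\<^sup>+ \<omega>. ennreal (regret d T p q r (fst \<omega>) (fst (snd \<omega>)) (snd (snd \<omega>)))
                  \<partial>measure_pmf (outcome T P N)) \<partial>S)"

end

(*
  The adversary draws s uniformly from {-1,0,1}^d, takes theta = h * s with h^2 = d / (96 B), shows
  the basis vector e_(t mod d) in round t and lets the label there be a +-1/2 coin with mean
  h * s_(t mod d).  A prediction depends on the coins only through the queried labels, so the
  unqueried coins may be replaced by fair ones.  Fixing all coordinates of s except j = t mod d,
  Le Cam's two-point argument between s_j = 1 and s_j = -1 then forces an expected squared error
  of at least 2 h^2 / 3 - 16 h^4 E[N_j] in round t, where N_j counts the queries of coordinate j: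
  the Hellinger affinity of the two coin laws is (1 - 4 h^2)^(N_j / 2).  The budget gives
  sum_t N_(t mod d) <= 2 T B / d, hence expected regret at least
  2 h^2 T / 3 - 32 h^4 T B / d = h^2 T / 3 = d T / (288 B).
*)
theory Submission
  imports Defs
begin

section \<open>Sub-Gaussian coin noise\<close>

lemma sub_gaussian_pmf_if_bounded:
  fixes N :: "real pmf"
  assumes support: "set_pmf N \<subseteq> {a..b}" and mean: "zero_mean_pmf N"
  shows "sub_gaussian_pmf N ((b - a)^2 / 4)"
  unfolding sub_gaussian_pmf_def
proof
  fix l :: real
  have E0: "measure_pmf.expectation N (\<lambda>x. x) = 0"
    using mean by (simp add: zero_mean_pmf_def)
  have AE: "AE x in measure_pmf N. x \<in> {a..b}"
    using support by (auto simp: AE_measure_pmf_iff)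
  have mgf: "(\<integral>\<^sup>+x. exp (l * x) \<partial>measure_pmf N) \<le> ennreal (exp (l^2 * ((b - a)^2 / 4) / 2))"
  proof (cases l "0::real" rule: linorder_cases)
    case less
    interpret interval_bounded_random_variable "measure_pmf N" "\<lambda>x. - x" "- b" "- a"
      by unfold_locales (use AE in auto)
    have "(\<integral>\<^sup>+x. exp ((- l) * (- x)) \<partial>measure_pmf N) \<le> ennreal (exp ((- l)^2 * (- a - - b)^2 / 8))"
      by (rule Hoeffdings_lemma_nn_integral_0) (use less E0 in auto)
    then show ?thesis by simp
  next
    case equal
    then show ?thesis by (simp add: measure_pmf.emeasure_space_1)
  next
    case greater
    interpret interval_bounded_random_variable "measure_pmf N" "\<lambda>x. x" a b
      by unfold_locales (use AE in auto)
    show ?thesis using Hoeffdings_lemma_nn_integral_0[OF greater E0] by simp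
  qed
  have int: "integrable N (\<lambda>x. exp (l * x))"
    by (rule integrableI_nonneg) (use le_less_trans[OF mgf] in auto)
  have "ennreal (measure_pmf.expectation N (\<lambda>x. exp (l * x))) = (\<integral>\<^sup>+x. exp (l * x) \<partial>measure_pmf N)"
    by (rule nn_integral_eq_integral[OF int, symmetric]) auto
  with mgf have "measure_pmf.expectation N (\<lambda>x. exp (l * x)) \<le> exp (l^2 * ((b - a)^2 / 4) / 2)"
    by (metis ennreal_le_iff exp_ge_zero)
  with int show "integrable N (\<lambda>x. exp (l * x)) \<and>
      measure_pmf.expectation N (\<lambda>x. exp (l * x)) \<le> exp (l^2 * ((b - a)^2 / 4) / 2)" ..
qed

definition coin_label :: "bool \<Rightarrow> real" where
  "coin_label x = (if x then 1/2 else -1/2)"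

text \<open>With this noise the label \<open>\<mu> + \<xi>\<close> is a coin \<open>\<plusminus>1/2\<close> of mean \<open>\<mu>\<close>.\<close>

definition coin_noise :: "real \<Rightarrow> real pmf" where
  "coin_noise \<mu> = map_pmf (\<lambda>x. coin_label x - \<mu>) (bernoulli_pmf (1/2 + \<mu>))"

lemma set_pmf_coin_noise: "set_pmf (coin_noise \<mu>) \<subseteq> {-1/2 - \<mu>..1/2 - \<mu>}"
  by (auto simp: coin_noise_def coin_label_def)

lemma zero_mean_coin_noise:
  assumes "\<bar>\<mu>\<bar> \<le> 1/2"
  shows "zero_mean_pmf (coin_noise \<mu>)"
proof -
  have "integrable (measure_pmf (coin_noise \<mu>)) (\<lambda>x. x)"
    by (rule integrable_measure_pmf_finite) (simp add: coin_noise_def)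
  moreover have "measure_pmf.expectation (coin_noise \<mu>) (\<lambda>x. x) = 0"
    using assms by (simp add: coin_noise_def coin_label_def algebra_simps)
  ultimately show ?thesis
    by (simp add: zero_mean_pmf_def)
qed

lemma sub_gaussian_coin_noise:
  assumes "\<bar>\<mu>\<bar> \<le> 1/2"
  shows "sub_gaussian_pmf (coin_noise \<mu>) (1/4)"
  using sub_gaussian_pmf_if_bounded[OF set_pmf_coin_noise zero_mean_coin_noise[OF assms]]
  by simp

section \<open>Finite coin sequences\<close>

definition coin_seqs :: "nat \<Rightarrow> (nat \<Rightarrow> bool) set" where
  "coin_seqs n = PiE_dflt {..<n} False (\<lambda>_. UNIV)"

lemma sum_PiE_dflt_remove:
  assumes "j \<in> I"
  shows "(\<Sum>f\<in>PiE_dflt I dflt A. F f) = (\<Sum>f\<in>PiE_dflt (I - {j}) dflt A. \<Sum>x\<in>A j. F (f(j := x)))"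
proof -
  have "bij_betw (\<lambda>(f, x). f(j := x)) (PiE_dflt (I - {j}) dflt A \<times> A j) (PiE_dflt I dflt A)"
    by (rule bij_betwI[where g = "\<lambda>f. (f(j := dflt), f j)"])
      (use assms in \<open>auto simp: PiE_dflt_def fun_eq_iff\<close>)
  then have "(\<Sum>f\<in>PiE_dflt I dflt A. F f) = (\<Sum>(f, x)\<in>PiE_dflt (I - {j}) dflt A \<times> A j. F (f(j := x)))"
    by (subst sum.reindex_bij_betw[symmetric]) (auto simp: case_prod_unfold)
  then show ?thesis
    by (simp add: sum.cartesian_product)
qed

lemma finite_coin_seqs: "finite (coin_seqs n)"
  unfolding coin_seqs_def by (rule finite_PiE_dflt) auto

lemma coin_seqs_0: "coin_seqs 0 = {\<lambda>_. False}"
  by (auto simp: coin_seqs_def PiE_dflt_def)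

lemma sum_coin_seqs_Suc:
  "(\<Sum>b\<in>coin_seqs (Suc n). F b) = (\<Sum>b\<in>coin_seqs n. \<Sum>x\<in>UNIV. F (b(n := x)))"
proof -
  have "{..<Suc n} - {n} = {..<n}" by auto
  then show ?thesis
    unfolding coin_seqs_def by (subst sum_PiE_dflt_remove[of n]) auto
qed

lemma prod_lessThan_fun_upd_self: "(\<Prod>u<(n::nat). F u ((b(n := x)) u)) = (\<Prod>u<n. F u (b u))"
  by (intro prod.cong refl) auto

lemma sum_coin_seqs_prod_eq_1:
  fixes w :: "nat \<Rightarrow> bool \<Rightarrow> real"
  assumes "\<And>u. w u True + w u False = 1"
  shows "(\<Sum>b\<in>coin_seqs n. \<Prod>u<n. w u (b u)) = 1"
proof (induction n)
  case 0
  then show ?case by (simp add: coin_seqs_0)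
next
  case (Suc n)
  have "(\<Sum>b\<in>coin_seqs (Suc n). \<Prod>u<Suc n. w u (b u))
      = (\<Sum>b\<in>coin_seqs n. (\<Prod>u<n. w u (b u)) * (w n True + w n False))"
    by (simp add: sum_coin_seqs_Suc prod_lessThan_fun_upd_self UNIV_bool algebra_simps)
  with Suc assms show ?case by simp
qed

definition coin_weight :: "real \<Rightarrow> bool \<Rightarrow> real" where
  "coin_weight m x = (if x then 1/2 + m else 1/2 - m)"

definition seq_weight :: "(nat \<Rightarrow> real) \<Rightarrow> nat \<Rightarrow> (nat \<Rightarrow> bool) \<Rightarrow> real" where
  "seq_weight \<mu> n b = (\<Prod>u<n. coin_weight (\<mu> u) (b u))"

lemma coin_weight_True_False: "coin_weight m True + coin_weight m False = 1"
  by (simp add: coin_weight_def)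

lemma coin_weight_nonneg: "\<bar>m\<bar> \<le> 1/2 \<Longrightarrow> 0 \<le> coin_weight m x"
  by (auto simp: coin_weight_def)

lemma seq_weight_nonneg: "(\<And>u. u < n \<Longrightarrow> \<bar>\<mu> u\<bar> \<le> 1/2) \<Longrightarrow> 0 \<le> seq_weight \<mu> n b"
  unfolding seq_weight_def by (intro prod_nonneg coin_weight_nonneg) auto

lemma sum_seq_weight: "(\<Sum>b\<in>coin_seqs n. seq_weight \<mu> n b) = 1"
  unfolding seq_weight_def by (rule sum_coin_seqs_prod_eq_1) (rule coin_weight_True_False)

lemma seq_weight_cong: "(\<And>u. u < n \<Longrightarrow> \<mu> u = \<mu>' u) \<Longrightarrow> seq_weight \<mu> n = seq_weight \<mu>' n"
  by (simp add: seq_weight_def fun_eq_iff)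

lemma Pi_pmf_map_dependent:
  assumes "finite A"
  shows "Pi_pmf A dflt (\<lambda>x. map_pmf (f x) (g x)) =
         map_pmf (\<lambda>h x. if x \<in> A then f x (h x) else dflt) (Pi_pmf A dflt' g)"
proof -
  have "Pi_pmf A dflt (\<lambda>x. map_pmf (f x) (g x)) = Pi_pmf A dflt (\<lambda>x. g x \<bind> (\<lambda>y. return_pmf (f x y)))"
    by (simp add: map_pmf_def)
  also have "\<dots> = Pi_pmf A dflt' g \<bind> (\<lambda>h. Pi_pmf A dflt (\<lambda>x. return_pmf (f x (h x))))"
    by (rule Pi_pmf_bind[OF assms])
  also have "\<dots> = map_pmf (\<lambda>h x. if x \<in> A then f x (h x) else dflt) (Pi_pmf A dflt' g)"
    using assms by (simp add: map_pmf_def)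
  finally show ?thesis .
qed

lemma nn_integral_Pi_bernoulli:
  assumes \<mu>: "\<And>t. t < n \<Longrightarrow> \<bar>\<mu> t\<bar> \<le> 1/2" and g: "\<And>b. 0 \<le> g b"
  shows "(\<integral>\<^sup>+b. ennreal (g b) \<partial>Pi_pmf {..<n} False (\<lambda>t. bernoulli_pmf (1/2 + \<mu> t))) =
         ennreal (\<Sum>b\<in>coin_seqs n. seq_weight \<mu> n b * g b)"
proof -
  let ?P = "Pi_pmf {..<n} False (\<lambda>t. bernoulli_pmf (1/2 + \<mu> t))"
  have pmf_P: "pmf ?P b = seq_weight \<mu> n b" if "b \<in> coin_seqs n" for b
  proof -
    have "pmf ?P b = (\<Prod>t<n. pmf (bernoulli_pmf (1/2 + \<mu> t)) (b t))"
      using that by (intro pmf_Pi') (auto simp: coin_seqs_def PiE_dflt_def)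
    also have "\<dots> = seq_weight \<mu> n b"
      unfolding seq_weight_def using \<mu> by (intro prod.cong refl) (force simp: coin_weight_def abs_le_iff)
    finally show ?thesis .
  qed
  have "set_pmf ?P \<subseteq> coin_seqs n"
    using set_Pi_pmf_subset[of "{..<n}" False] by (auto simp: coin_seqs_def PiE_dflt_def)
  then have "(\<integral>\<^sup>+b. ennreal (g b) \<partial>?P) = (\<Sum>b\<in>coin_seqs n. ennreal (g b) * pmf ?P b)"
    by (intro nn_integral_measure_pmf_support finite_coin_seqs) auto
  also have "\<dots> = (\<Sum>b\<in>coin_seqs n. ennreal (seq_weight \<mu> n b * g b))"
    using \<mu> g by (intro sum.cong refl) (simp add: pmf_P seq_weight_nonneg ennreal_mult mult.commute)
  also have "\<dots> = ennreal (\<Sum>b\<in>coin_seqs n. seq_weight \<mu> n b * g b)"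
    using \<mu> g by (intro sum_ennreal mult_nonneg_nonneg seq_weight_nonneg) auto
  finally show ?thesis .
qed

section \<open>Statistics of the queried labels\<close>

definition asks :: "nat \<Rightarrow> learner_query \<Rightarrow> real \<Rightarrow> inputs \<Rightarrow> (nat \<Rightarrow> real) \<Rightarrow> nat \<Rightarrow> bool" where
  "asks d q r xs y t \<longleftrightarrow> q r t (seen_inputs d xs t) (seen_labels (queried d q r xs y t) y)"

lemma queried_Suc_asks:
  "queried d q r xs y (Suc t) =
     (if asks d q r xs y t then insert t (queried d q r xs y t) else queried d q r xs y t)"
  by (simp add: asks_def)

lemma queried_subset: "queried d q r xs y n \<subseteq> {..<n}"
  by (induction n) auto

lemma queried_mono: "m \<le> n \<Longrightarrow> queried d q r xs y m \<subseteq> queried d q r xs y n"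
  by (induction n) (auto simp: le_Suc_eq)

lemma mem_queried_iff: "u < n \<Longrightarrow> u \<in> queried d q r xs y n \<longleftrightarrow> asks d q r xs y u"
  by (induction n) (auto simp: queried_Suc_asks less_Suc_eq dest: queried_subset[THEN subsetD]
                         simp del: queried.simps)

lemma queried_cong:
  assumes "\<And>u. u \<in> queried d q r xs y n \<Longrightarrow> y' u = y u"
  shows "queried d q r xs y' n = queried d q r xs y n"
  using assms
proof (induction n)
  case (Suc n)
  have agree: "y' u = y u" if "u \<in> queried d q r xs y n" for u
    using Suc.prems queried_mono[of n "Suc n" d q r xs y] that by auto
  then have same: "queried d q r xs y' n = queried d q r xs y n"
    by (rule Suc.IH)
  with agree have "seen_labels (queried d q r xs y' n) y' = seen_labels (queried d q r xs y n) y"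
    by (auto simp: seen_labels_def)
  with same show ?case
    by (simp add: asks_def)
qed simp

lemma seen_labels_queried_cong:
  assumes "\<And>u. u \<in> queried d q r xs y n \<Longrightarrow> y' u = y u"
  shows "seen_labels (queried d q r xs y' n) y' = seen_labels (queried d q r xs y n) y"
  using queried_cong[OF assms] assms by (auto simp: seen_labels_def)

lemma asks_cong:
  assumes "\<And>u. u \<in> queried d q r xs y n \<Longrightarrow> y' u = y u"
  shows "asks d q r xs y' n = asks d q r xs y n"
  using seen_labels_queried_cong[OF assms] by (simp add: asks_def)

lemma prediction_cong:
  assumes "\<And>u. u \<in> queried d q r xs y t \<Longrightarrow> y' u = y u"
  shows "prediction d p q r xs y' t = prediction d p q r xs y t"
  using seen_labels_queried_cong[OF assms] by (simp add: prediction_def)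

lemma queried_prefix: "(\<And>u. u < n \<Longrightarrow> y' u = y u) \<Longrightarrow> queried d q r xs y' n = queried d q r xs y n"
  using queried_cong queried_subset by blast

lemma asks_prefix: "(\<And>u. u < n \<Longrightarrow> y' u = y u) \<Longrightarrow> asks d q r xs y' n = asks d q r xs y n"
  using asks_cong queried_subset by blast

lemma prediction_prefix:
  "(\<And>u. u < t \<Longrightarrow> y' u = y u) \<Longrightarrow> prediction d p q r xs y' t = prediction d p q r xs y t"
  using prediction_cong queried_subset by blast

definition coin_labels :: "(nat \<Rightarrow> bool) \<Rightarrow> nat \<Rightarrow> real" where
  "coin_labels b u = coin_label (b u)"

lemma coin_labels_eq_iff [simp]: "coin_labels b' u = coin_labels b u \<longleftrightarrow> b' u = b u"
  by (simp add: coin_labels_def coin_label_def)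

definition query_determined ::
  "nat \<Rightarrow> learner_query \<Rightarrow> real \<Rightarrow> inputs \<Rightarrow> nat \<Rightarrow> ((nat \<Rightarrow> bool) \<Rightarrow> 'a) \<Rightarrow> bool" where
  "query_determined d q r xs n g \<longleftrightarrow>
     (\<forall>b b'. (\<forall>u \<in> queried d q r xs (coin_labels b) n. b' u = b u) \<longrightarrow> g b' = g b)"

lemma query_determined_comp:
  "query_determined d q r xs n g \<Longrightarrow> query_determined d q r xs n (\<lambda>b. F (g b))"
  by (simp add: query_determined_def)

lemma query_determined_card_queried:
  "query_determined d q r xs n (\<lambda>b. card (queried d q r xs (coin_labels b) n \<inter> J))"
  unfolding query_determined_def by (metis coin_labels_eq_iff queried_cong)

lemma query_determined_prediction:
  assumes "t \<le> n"
  shows "query_determined d q r xs n (\<lambda>b. prediction d p q r xs (coin_labels b) t)"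
  unfolding query_determined_def
proof (intro allI impI)
  fix b b' :: "nat \<Rightarrow> bool"
  assume "\<forall>u \<in> queried d q r xs (coin_labels b) n. b' u = b u"
  then have "coin_labels b' u = coin_labels b u" if "u \<in> queried d q r xs (coin_labels b) t" for u
    using queried_mono[OF assms, of d q r xs "coin_labels b"] that by auto
  then show "prediction d p q r xs (coin_labels b') t = prediction d p q r xs (coin_labels b) t"
    by (rule prediction_cong)
qed

lemma queried_coin_upd:
  "queried d q r xs (coin_labels (b(n := x))) n = queried d q r xs (coin_labels b) n"
  by (intro queried_prefix) (simp add: coin_labels_def)

lemma asks_coin_upd:
  "u \<le> n \<Longrightarrow> asks d q r xs (coin_labels (b(n := x))) u = asks d q r xs (coin_labels b) u"
  by (intro asks_prefix) (simp add: coin_labels_def)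

lemma query_determined_sum_upd:
  assumes "query_determined d q r xs (Suc n) g"
  shows "query_determined d q r xs n (\<lambda>b. \<Sum>x\<in>UNIV. c x * g (b(n := x)))"
  unfolding query_determined_def
proof (intro allI impI)
  fix b b' :: "nat \<Rightarrow> bool"
  assume agree: "\<forall>u \<in> queried d q r xs (coin_labels b) n. b' u = b u"
  have "g (b'(n := x)) = g (b(n := x))" for x
  proof -
    have "queried d q r xs (coin_labels (b(n := x))) (Suc n) \<subseteq> insert n (queried d q r xs (coin_labels b) n)"
      by (auto simp: queried_Suc_asks queried_coin_upd simp del: queried.simps)
    with agree have "\<forall>u \<in> queried d q r xs (coin_labels (b(n := x))) (Suc n). (b'(n := x)) u = (b(n := x)) u"
      by (auto simp del: queried.simps)
    with assms show ?thesis
      unfolding query_determined_def by blast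
  qed
  then show "(\<Sum>x\<in>UNIV. c x * g (b'(n := x))) = (\<Sum>x\<in>UNIV. c x * g (b(n := x)))"
    by simp
qed

lemma query_determined_unasked:
  assumes "query_determined d q r xs (Suc n) g" and "\<not> asks d q r xs (coin_labels b) n"
  shows "g (b(n := x)) = g (b(n := False))"
proof -
  have "queried d q r xs (coin_labels (b(n := False))) (Suc n) = queried d q r xs (coin_labels b) n"
    using assms(2) by (simp add: queried_Suc_asks asks_coin_upd queried_coin_upd del: queried.simps)
  then have "\<forall>u \<in> queried d q r xs (coin_labels (b(n := False))) (Suc n). (b(n := x)) u = (b(n := False)) u"
    using queried_subset[of d q r xs "coin_labels b" n] by auto
  with assms(1) show ?thesis
    unfolding query_determined_def by blast
qed

text \<open>Coins the learner never asks for are never seen, so their weights may be traded for any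
  others of the same total mass.\<close>

lemma sum_coin_seqs_reweight_unqueried:
  fixes w w' :: "nat \<Rightarrow> bool \<Rightarrow> real"
  assumes w: "\<And>u. w u True + w u False = w' u True + w' u False"
    and g: "query_determined d q r xs n g"
  shows "(\<Sum>b\<in>coin_seqs n. (\<Prod>u<n. w u (b u)) * g b) =
         (\<Sum>b\<in>coin_seqs n. (\<Prod>u<n. if asks d q r xs (coin_labels b) u then w u (b u) else w' u (b u)) * g b)"
  using g
proof (induction n arbitrary: g)
  case 0
  then show ?case by (simp add: coin_seqs_0)
next
  case (Suc n)
  let ?A = "\<lambda>b u. asks d q r xs (coin_labels b) u"
  define G where "G b = (\<Sum>x\<in>UNIV. w n x * g (b(n := x)))" for b
  have G_eq: "G b = (\<Sum>x\<in>UNIV. (if ?A b n then w n x else w' n x) * g (b(n := x)))" for b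
  proof (cases "?A b n")
    case False
    have const: "g (b(n := True)) = g (b(n := False))"
      by (rule query_determined_unasked[OF Suc.prems False])
    have "G b = (w n True + w n False) * g (b(n := False))"
      by (simp add: G_def UNIV_bool const algebra_simps)
    also have "\<dots> = (w' n True + w' n False) * g (b(n := False))"
      by (simp add: w)
    also have "\<dots> = (\<Sum>x\<in>UNIV. w' n x * g (b(n := x)))"
      by (simp add: UNIV_bool const algebra_simps)
    finally show ?thesis
      using False by simp
  qed (simp add: G_def)
  have "(\<Sum>b\<in>coin_seqs (Suc n). (\<Prod>u<Suc n. w u (b u)) * g b) = (\<Sum>b\<in>coin_seqs n. (\<Prod>u<n. w u (b u)) * G b)"
    by (simp add: sum_coin_seqs_Suc prod_lessThan_fun_upd_self G_def sum_distrib_left mult.assoc)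
  also have "\<dots> = (\<Sum>b\<in>coin_seqs n. (\<Prod>u<n. if ?A b u then w u (b u) else w' u (b u)) * G b)"
    unfolding G_def by (rule Suc.IH[OF query_determined_sum_upd[OF Suc.prems]])
  also have "\<dots> = (\<Sum>b\<in>coin_seqs (Suc n). (\<Prod>u<Suc n. if ?A b u then w u (b u) else w' u (b u)) * g b)"
    by (simp add: sum_coin_seqs_Suc G_eq asks_coin_upd prod_lessThan_fun_upd_self sum_distrib_left mult.assoc
        cong: if_cong)
  finally show ?case .
qed

section \<open>A two-point bound under queries\<close>

text \<open>The law of the coins after every coin the learner does not ask for is made fair.\<close>

definition queried_weight ::
  "nat \<Rightarrow> learner_query \<Rightarrow> real \<Rightarrow> inputs \<Rightarrow> (nat \<Rightarrow> real) \<Rightarrow> nat \<Rightarrow> (nat \<Rightarrow> bool) \<Rightarrow> real" where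
  "queried_weight d q r xs \<mu> n b =
     (\<Prod>u<n. if asks d q r xs (coin_labels b) u then coin_weight (\<mu> u) (b u) else 1/2)"

lemma queried_weight_nonneg: "(\<And>u. \<bar>\<mu> u\<bar> \<le> 1/2) \<Longrightarrow> 0 \<le> queried_weight d q r xs \<mu> n b"
  unfolding queried_weight_def by (intro prod_nonneg) (auto intro: coin_weight_nonneg)

lemma sum_seq_weight_eq_queried_weight:
  assumes "query_determined d q r xs n g"
  shows "(\<Sum>b\<in>coin_seqs n. seq_weight \<mu> n b * g b) =
         (\<Sum>b\<in>coin_seqs n. queried_weight d q r xs \<mu> n b * g b)"
  unfolding seq_weight_def queried_weight_def
  by (rule sum_coin_seqs_reweight_unqueried) (simp_all add: coin_weight_True_False assms)

lemma sum_queried_weight: "(\<Sum>b\<in>coin_seqs n. queried_weight d q r xs \<mu> n b) = 1"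
  using sum_seq_weight_eq_queried_weight[where g = "\<lambda>_. 1"] sum_seq_weight
  by (simp add: query_determined_def)

lemma two_point_sq_error_ge:
  fixes a b f h :: real
  assumes "0 \<le> a" "0 \<le> b"
  shows "4 * h^2 * sqrt (a * b) - h^2 * (a + b) \<le> a * (f - h)^2 + b * (f + h)^2"
proof (cases "a + b = 0")
  case True
  with assms have "a = 0" "b = 0" by auto
  then show ?thesis by simp
next
  case False
  with assms have pos: "0 < a + b" by simp
  define k where "k = sqrt (a * b)"
  have k2: "k * k = a * b"
    using assms by (simp add: k_def)
  have "(a + b) * (a * (f - h)^2 + b * (f + h)^2) - (a + b) * (4 * h^2 * k - h^2 * (a + b))
      = (a * (f - h) + b * (f + h))^2 + h^2 * (a + b - 2 * k)^2"
    by (simp add: power2_eq_square algebra_simps k2)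
  then have "(a + b) * (4 * h^2 * k - h^2 * (a + b)) \<le> (a + b) * (a * (f - h)^2 + b * (f + h)^2)"
    by (smt (verit) zero_le_power2 mult_nonneg_nonneg)
  with pos show ?thesis
    unfolding k_def by (simp add: mult_le_cancel_left_pos)
qed

definition tilted_bias :: "nat set \<Rightarrow> real \<Rightarrow> (nat \<Rightarrow> real) \<Rightarrow> real \<Rightarrow> nat \<Rightarrow> real" where
  "tilted_bias J h m \<sigma> u = (if u \<in> J then h * \<sigma> else m u)"

lemma le_half_if_four_sq_le_one: "0 \<le> (h::real) \<Longrightarrow> 4 * h^2 \<le> 1 \<Longrightarrow> h \<le> 1/2"
  using power2_le_imp_le[of h "1/2"] by (simp add: power_divide)

lemma tilted_bias_bound:
  assumes "0 \<le> h" "4 * h^2 \<le> 1" "\<And>u. \<bar>m u\<bar> \<le> 1/2" "\<sigma> \<in> {-1, 0, 1}"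
  shows "\<bar>tilted_bias J h m \<sigma> u\<bar> \<le> 1/2"
  using assms le_half_if_four_sq_le_one[of h] by (auto simp: tilted_bias_def)

text \<open>Under \<open>\<sigma> = \<plusminus>1\<close> only the queried coins in \<open>J\<close> differ, and each such pair of weights
  \<open>1/2 \<plusminus> h\<close> has geometric mean \<open>(1/2) sqrt (1 - 4 h\<^sup>2)\<close>: the Hellinger affinity decays with the
  number of queries in \<open>J\<close>.\<close>

lemma sqrt_queried_weight_tilted:
  assumes h: "0 \<le> h" "4 * h^2 \<le> 1" and m: "\<And>u. \<bar>m u\<bar> \<le> 1/2"
  shows "sqrt (queried_weight d q r xs (tilted_bias J h m 1) n b *
               queried_weight d q r xs (tilted_bias J h m (-1)) n b) =
         queried_weight d q r xs (tilted_bias J h m 0) n b *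
         sqrt (1 - 4 * h^2) ^ card (queried d q r xs (coin_labels b) n \<inter> J)"
proof -
  let ?A = "\<lambda>u. asks d q r xs (coin_labels b) u"
  let ?F = "\<lambda>\<sigma> u. if ?A u then coin_weight (tilted_bias J h m \<sigma> u) (b u) else 1/2"
  let ?c = "\<lambda>u. if ?A u \<and> u \<in> J then sqrt (1 - 4 * h^2) else 1"
  have rho2: "sqrt (1 - 4 * h^2)^2 = 1 - 4 * h^2"
    using h by simp
  have "?F 1 u * ?F (-1) u = (?F 0 u * ?c u)^2" for u
    using rho2 by (auto simp: coin_weight_def tilted_bias_def power2_eq_square algebra_simps)
  then have "queried_weight d q r xs (tilted_bias J h m 1) n b * queried_weight d q r xs (tilted_bias J h m (-1)) n b
      = (\<Prod>u<n. (?F 0 u * ?c u)^2)"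
    by (simp add: queried_weight_def flip: prod.distrib)
  also have "\<dots> = (queried_weight d q r xs (tilted_bias J h m 0) n b * (\<Prod>u<n. ?c u))^2"
    by (simp add: queried_weight_def power_mult_distrib prod.distrib flip: prod_power_distrib)
  finally have "queried_weight d q r xs (tilted_bias J h m 1) n b * queried_weight d q r xs (tilted_bias J h m (-1)) n b
      = (queried_weight d q r xs (tilted_bias J h m 0) n b * (\<Prod>u<n. ?c u))^2" .
  moreover have "0 \<le> queried_weight d q r xs (tilted_bias J h m 0) n b * (\<Prod>u<n. ?c u)"
    using h m by (intro mult_nonneg_nonneg prod_nonneg queried_weight_nonneg tilted_bias_bound) auto
  moreover have "{..<n} \<inter> {u. ?A u \<and> u \<in> J} = queried d q r xs (coin_labels b) n \<inter> J"
    using mem_queried_iff[of _ n] queried_subset[of d q r xs "coin_labels b" n] by auto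
  then have "(\<Prod>u<n. ?c u) = sqrt (1 - 4 * h^2) ^ card (queried d q r xs (coin_labels b) n \<inter> J)"
    by (simp add: prod.If_cases)
  ultimately show ?thesis
    by simp
qed

lemma two_point_query_lower_bound:
  fixes J :: "nat set"
  assumes h: "0 \<le> h" "4 * h^2 \<le> 1" and m: "\<And>u. \<bar>m u\<bar> \<le> 1/2"
    and f: "query_determined d q r xs n f"
  defines "N b \<equiv> real (card (queried d q r xs (coin_labels b) n \<inter> J))"
  shows "2 * h^2 - 16 * h^4 * (\<Sum>b\<in>coin_seqs n. seq_weight (tilted_bias J h m 0) n b * N b) \<le>
         (\<Sum>b\<in>coin_seqs n. seq_weight (tilted_bias J h m 1) n b * (f b - h)^2) +
         (\<Sum>b\<in>coin_seqs n. seq_weight (tilted_bias J h m (-1)) n b * (f b + h)^2)"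
proof -
  define W where "W \<sigma> b = queried_weight d q r xs (tilted_bias J h m \<sigma>) n b" for \<sigma> b
  define \<rho> where "\<rho> = sqrt (1 - 4 * h^2)"
  define E where "E = (\<Sum>b\<in>coin_seqs n. W 0 b * N b)"
  have W_nonneg: "0 \<le> W \<sigma> b" if "\<sigma> \<in> {-1, 0, 1}" for \<sigma> b
    unfolding W_def using h m that by (intro queried_weight_nonneg tilted_bias_bound) auto
  have N_determined: "query_determined d q r xs n N"
    unfolding N_def by (rule query_determined_comp[OF query_determined_card_queried])
  have "1 - \<rho> \<le> 4 * h^2"
  proof -
    have "(1 - 4 * h^2) * (1 - 4 * h^2) \<le> 1 - 4 * h^2"
      using h by (intro mult_left_le_one_le) auto
    then have "(1 - 4 * h^2)^2 \<le> 1 - 4 * h^2"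
      by (simp add: power2_eq_square)
    then show ?thesis
      unfolding \<rho>_def using real_le_rsqrt by fastforce
  qed
  have power_ge: "1 - 4 * h^2 * N b \<le> \<rho> ^ card (queried d q r xs (coin_labels b) n \<inter> J)" for b
  proof -
    let ?k = "card (queried d q r xs (coin_labels b) n \<inter> J)"
    have "1 + real ?k * (\<rho> - 1) \<le> \<rho> ^ ?k"
      using Bernoulli_inequality[of "\<rho> - 1" ?k] h by (simp add: \<rho>_def)
    moreover have "real ?k * (1 - \<rho>) \<le> real ?k * (4 * h^2)"
      using \<open>1 - \<rho> \<le> 4 * h^2\<close> by (intro mult_left_mono) auto
    ultimately show ?thesis
      by (simp add: N_def algebra_simps)
  qed
  have "W 0 b - 4 * h^2 * (W 0 b * N b) \<le> sqrt (W 1 b * W (-1) b)" for b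
  proof -
    have "W 0 b * (1 - 4 * h^2 * N b) \<le> W 0 b * \<rho> ^ card (queried d q r xs (coin_labels b) n \<inter> J)"
      using power_ge W_nonneg[of 0 b] by (intro mult_left_mono) auto
    then show ?thesis
      by (simp add: W_def \<rho>_def sqrt_queried_weight_tilted[OF h m] algebra_simps)
  qed
  then have "(\<Sum>b\<in>coin_seqs n. W 0 b - 4 * h^2 * (W 0 b * N b)) \<le> (\<Sum>b\<in>coin_seqs n. sqrt (W 1 b * W (-1) b))"
    by (rule sum_mono)
  moreover have "(\<Sum>b\<in>coin_seqs n. W 0 b - 4 * h^2 * (W 0 b * N b)) = 1 - 4 * h^2 * E"
    by (simp add: E_def W_def sum_subtractf sum_queried_weight sum_distrib_left)
  ultimately have "1 - 4 * h^2 * E \<le> (\<Sum>b\<in>coin_seqs n. sqrt (W 1 b * W (-1) b))"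
    by simp
  then have "4 * h^2 * (1 - 4 * h^2 * E) \<le> 4 * h^2 * (\<Sum>b\<in>coin_seqs n. sqrt (W 1 b * W (-1) b))"
    by (rule mult_left_mono) simp
  then have "2 * h^2 - 16 * h^4 * E \<le> 4 * h^2 * (\<Sum>b\<in>coin_seqs n. sqrt (W 1 b * W (-1) b)) - 2 * h^2"
    by (simp add: algebra_simps power4_eq_xxxx power2_eq_square)
  also have "\<dots> = (\<Sum>b\<in>coin_seqs n. 4 * h^2 * sqrt (W 1 b * W (-1) b) - h^2 * (W 1 b + W (-1) b))"
    by (simp add: W_def sum_subtractf sum.distrib sum_queried_weight flip: sum_distrib_left)
  also have "\<dots> \<le> (\<Sum>b\<in>coin_seqs n. W 1 b * (f b - h)^2 + W (-1) b * (f b + h)^2)"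
    by (intro sum_mono two_point_sq_error_ge W_nonneg) auto
  also have "\<dots> = (\<Sum>b\<in>coin_seqs n. seq_weight (tilted_bias J h m 1) n b * (f b - h)^2) +
                  (\<Sum>b\<in>coin_seqs n. seq_weight (tilted_bias J h m (-1)) n b * (f b + h)^2)"
    using sum_seq_weight_eq_queried_weight[OF query_determined_comp[OF f, of "\<lambda>y. (y - h)^2"]]
      sum_seq_weight_eq_queried_weight[OF query_determined_comp[OF f, of "\<lambda>y. (y + h)^2"]]
    by (simp add: W_def sum.distrib)
  finally show ?thesis
    by (simp add: E_def W_def sum_seq_weight_eq_queried_weight[OF N_determined])
qed

lemma card_residue_class_le:
  assumes "0 < (d::nat)"
  shows "card {t. t < T \<and> t mod d = k} \<le> T div d + 1"
proof -
  have "inj_on (\<lambda>t. t div d) {t. t < T \<and> t mod d = k}"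
    by (rule inj_onI) (metis (mono_tags, lifting) div_mult_mod_eq mem_Collect_eq)
  moreover have "(\<lambda>t. t div d) ` {t. t < T \<and> t mod d = k} \<subseteq> {..T div d}"
    by (auto intro: div_le_mono)
  ultimately have "card {t. t < T \<and> t mod d = k} \<le> card {..T div d}"
    by (intro card_inj_on_le) auto
  then show ?thesis
    by simp
qed

lemma sum_card_residue_classes_le:
  assumes "0 < (d::nat)" and Q: "Q \<subseteq> {..<T}"
  shows "(\<Sum>t<T. card (Q \<inter> {u. u mod d = t mod d})) \<le> card Q * (T div d + 1)"
proof -
  have "finite Q"
    using Q finite_subset by blast
  then have "(\<Sum>t<T. card (Q \<inter> {u. u mod d = t mod d})) = (\<Sum>t<T. \<Sum>u\<in>Q. if u mod d = t mod d then 1 else 0)"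
    by (simp add: sum.If_cases)
  also have "\<dots> = (\<Sum>u\<in>Q. card {t. t < T \<and> t mod d = u mod d})"
    by (subst sum.swap) (simp add: sum.If_cases Int_def conj_commute eq_commute)
  also have "\<dots> \<le> (\<Sum>u\<in>Q. T div d + 1)"
    by (intro sum_mono card_residue_class_le assms(1))
  finally show ?thesis
    by simp
qed

section \<open>The hard instance\<close>

definition basis_inputs :: "nat \<Rightarrow> nat \<Rightarrow> inputs" where
  "basis_inputs d T t = (\<lambda>i. if t < T \<and> i = t mod d then 1 else 0)"

definition sign_vectors :: "nat \<Rightarrow> (nat \<Rightarrow> real) set" where
  "sign_vectors d = PiE_dflt {..<d} 0 (\<lambda>_. {-1, 0, 1})"

text \<open>\<open>h\<^sup>2 = d / (96 B)\<close> balances the error \<open>2 h\<^sup>2 / 3\<close> per round against the price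
  \<open>32 h\<^sup>4 T B / d\<close> of the queries.\<close>

definition hard_scale :: "nat \<Rightarrow> nat \<Rightarrow> real" where
  "hard_scale d B = sqrt (real d / (96 * real B))"

definition hard_instances :: "nat \<Rightarrow> nat \<Rightarrow> nat \<Rightarrow> (vec \<times> inputs) pmf" where
  "hard_instances d T B =
     map_pmf (\<lambda>s. (\<lambda>i. hard_scale d B * s i, basis_inputs d T)) (pmf_of_set (sign_vectors d))"

definition hard_noise :: "nat \<Rightarrow> vec \<Rightarrow> inputs \<Rightarrow> nat \<Rightarrow> real pmf" where
  "hard_noise d \<theta> xs t = coin_noise (ip d \<theta> (xs t))"

lemma ip_basis_inputs: "0 < d \<Longrightarrow> t < T \<Longrightarrow> ip d \<theta> (basis_inputs d T t) = \<theta> (t mod d)"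
  by (simp add: ip_def basis_inputs_def if_distrib[of "\<lambda>x. _ * x"] sum.delta' cong: if_cong)

lemma vnorm_basis_inputs: "0 < d \<Longrightarrow> t < T \<Longrightarrow> vnorm d (basis_inputs d T t) = 1"
  by (simp add: vnorm_def basis_inputs_def if_distrib[of "\<lambda>x. x ^ 2"] sum.delta' cong: if_cong)

lemma finite_sign_vectors: "finite (sign_vectors d)"
  unfolding sign_vectors_def by (rule finite_PiE_dflt) auto

lemma sign_vectors_nonempty: "sign_vectors d \<noteq> {}"
  by (simp add: sign_vectors_def)

lemma abs_sign_vector_le_1: "s \<in> sign_vectors d \<Longrightarrow> \<bar>s i\<bar> \<le> 1"
  by (cases "i < d") (auto simp: sign_vectors_def PiE_dflt_def)

lemma sign_vectors_upd: "s \<in> sign_vectors d \<Longrightarrow> j < d \<Longrightarrow> \<sigma> \<in> {-1, 0, 1} \<Longrightarrow> s(j := \<sigma>) \<in> sign_vectors d"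
  by (auto simp: sign_vectors_def PiE_dflt_def)

lemma sign_vectors_except_subset: "PiE_dflt ({..<d} - {j}) 0 (\<lambda>_. {-1, 0, 1}) \<subseteq> sign_vectors d"
  by (auto simp: sign_vectors_def PiE_dflt_def)

lemma sum_sign_vectors_split:
  "j < d \<Longrightarrow> (\<Sum>s\<in>sign_vectors d. F s) =
     (\<Sum>s\<in>PiE_dflt ({..<d} - {j}) 0 (\<lambda>_. {-1, 0, 1}). \<Sum>\<sigma>\<in>{-1, 0, 1}. F (s(j := \<sigma>)))"
  unfolding sign_vectors_def by (intro sum_PiE_dflt_remove) simp

lemma vnorm_scaled_sign_vector:
  assumes "s \<in> sign_vectors d" "0 \<le> h" "h \<le> 1"
  shows "vnorm d (\<lambda>i. h * s i) \<le> sqrt (real d)"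
proof -
  have "(h * s i)^2 \<le> 1" for i
  proof -
    have "\<bar>h * s i\<bar> \<le> 1 * 1"
      unfolding abs_mult using assms abs_sign_vector_le_1[OF assms(1)] by (intro mult_mono) auto
    then show ?thesis
      using power_mono[of "\<bar>h * s i\<bar>" 1 2] by simp
  qed
  then have "(\<Sum>i<d. (h * s i)^2) \<le> real d"
    using sum_mono[of "{..<d}" "\<lambda>i. (h * s i)^2" "\<lambda>_. 1"] by simp
  then show ?thesis
    by (simp add: vnorm_def)
qed

lemma hard_scale_sq: "0 < B \<Longrightarrow> (hard_scale d B)^2 = real d / (96 * real B)"
  by (simp add: hard_scale_def)

lemma hard_scale_nonneg: "0 \<le> hard_scale d B"
  by (simp add: hard_scale_def)

lemma four_hard_scale_sq_le_1: "0 < B \<Longrightarrow> d \<le> B \<Longrightarrow> 4 * (hard_scale d B)^2 \<le> 1"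
  by (simp add: hard_scale_sq field_simps)

lemma hard_scale_le_half: "0 < B \<Longrightarrow> d \<le> B \<Longrightarrow> hard_scale d B \<le> 1/2"
  by (rule le_half_if_four_sq_le_one[OF hard_scale_nonneg four_hard_scale_sq_le_1])

lemma abs_hard_mean_le_half:
  assumes "0 < B" "d \<le> B" "s \<in> sign_vectors d"
  shows "\<bar>hard_scale d B * s i\<bar> \<le> 1/2"
proof -
  have "\<bar>hard_scale d B * s i\<bar> \<le> 1/2 * 1"
    unfolding abs_mult using assms abs_sign_vector_le_1[OF assms(3)] hard_scale_le_half[of B d]
    by (intro mult_mono) (auto simp: hard_scale_nonneg)
  then show ?thesis by simp
qed

lemma valid_hard_instances:
  assumes "0 < d" "0 < B" "d \<le> B"
  shows "valid_adversary d T (hard_instances d T B) (hard_noise d)"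
  unfolding valid_adversary_def
proof (intro ballI, clarify)
  fix \<theta> xs assume "(\<theta>, xs) \<in> set_pmf (hard_instances d T B)"
  then obtain s where s: "s \<in> sign_vectors d"
    and \<theta>: "\<theta> = (\<lambda>i. hard_scale d B * s i)" and xs: "xs = basis_inputs d T"
    by (auto simp: hard_instances_def finite_sign_vectors sign_vectors_nonempty)
  have mean: "\<bar>ip d \<theta> (xs t)\<bar> \<le> 1/2" if "t < T" for t
    using that assms abs_hard_mean_le_half[OF assms(2,3) s] by (simp add: \<theta> xs ip_basis_inputs)
  have "vnorm d \<theta> \<le> sqrt (real d)"
    unfolding \<theta> using hard_scale_le_half[OF assms(2,3)]
    by (intro vnorm_scaled_sign_vector s hard_scale_nonneg) auto
  moreover have "vnorm d (xs t) \<le> 1" if "t < T" for t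
    using that assms by (simp add: xs vnorm_basis_inputs)
  ultimately show "vnorm d \<theta> \<le> sqrt (real d) \<and>
       (\<forall>t<T. vnorm d (xs t) \<le> 1 \<and> \<bar>ip d \<theta> (xs t)\<bar> \<le> 1 \<and>
              zero_mean_pmf (hard_noise d \<theta> xs t) \<and> sub_gaussian_pmf (hard_noise d \<theta> xs t) (1/4))"
    using mean by (force simp: hard_noise_def intro!: zero_mean_coin_noise sub_gaussian_coin_noise)
qed

context
  fixes d T B :: nat and p :: learner_pred and q :: learner_query and r :: real
  assumes d: "0 < d" and dT: "d \<le> T" and B: "0 < B" "d \<le> B"
    and budget: "respects_budget d T B q"
begin

abbreviation hard_prediction :: "nat \<Rightarrow> (nat \<Rightarrow> bool) \<Rightarrow> real" where
  "hard_prediction t b \<equiv> prediction d p q r (basis_inputs d T) (coin_labels b) t"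

abbreviation hard_queries :: "nat \<Rightarrow> (nat \<Rightarrow> bool) \<Rightarrow> real" where
  "hard_queries j b \<equiv> real (card (queried d q r (basis_inputs d T) (coin_labels b) T \<inter> {u. u mod d = j}))"

abbreviation hard_weight :: "(nat \<Rightarrow> real) \<Rightarrow> (nat \<Rightarrow> bool) \<Rightarrow> real" where
  "hard_weight s \<equiv> seq_weight (\<lambda>u. hard_scale d B * s (u mod d)) T"

lemma hard_weight_nonneg: "s \<in> sign_vectors d \<Longrightarrow> 0 \<le> hard_weight s b"
  using B by (intro seq_weight_nonneg abs_hard_mean_le_half)

lemma hard_coordinate_error_ge:
  assumes t: "t < T" and s: "s \<in> sign_vectors d"
  defines "h \<equiv> hard_scale d B" and "j \<equiv> t mod d"
  shows "2 * h^2 - 16 * h^4 * (\<Sum>b\<in>coin_seqs T. hard_weight (s(j := 0)) b * hard_queries j b)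
         \<le> (\<Sum>\<sigma>\<in>{-1, 0, 1}. \<Sum>b\<in>coin_seqs T. hard_weight (s(j := \<sigma>)) b * (hard_prediction t b - h * \<sigma>)^2)"
proof -
  let ?E = "\<lambda>s g. \<Sum>b\<in>coin_seqs T. hard_weight s b * g b"
  have tilt: "tilted_bias {u. u mod d = j} h (\<lambda>u. h * s (u mod d)) \<sigma> = (\<lambda>u. h * (s(j := \<sigma>)) (u mod d))"
    for \<sigma> by (auto simp: tilted_bias_def fun_eq_iff)
  have h0: "0 \<le> h" and h1: "4 * h^2 \<le> 1"
    using B by (simp_all add: h_def hard_scale_nonneg four_hard_scale_sq_le_1)
  have m: "\<bar>h * s (u mod d)\<bar> \<le> 1/2" for u
    unfolding h_def using B s by (rule abs_hard_mean_le_half)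
  have "query_determined d q r (basis_inputs d T) T (hard_prediction t)"
    using t by (intro query_determined_prediction) simp
  from two_point_query_lower_bound[where m = "\<lambda>u. h * s (u mod d)" and J = "{u. u mod d = j}",
      OF h0 h1 m this, unfolded tilt]
  have "2 * h^2 - 16 * h^4 * ?E (s(j := 0)) (hard_queries j)
      \<le> ?E (s(j := 1)) (\<lambda>b. (hard_prediction t b - h)^2) + ?E (s(j := -1)) (\<lambda>b. (hard_prediction t b + h)^2)"
    by (simp add: h_def)
  moreover have "0 \<le> ?E (s(j := 0)) (\<lambda>b. (hard_prediction t b - h * 0)^2)"
    using d s by (intro sum_nonneg mult_nonneg_nonneg hard_weight_nonneg sign_vectors_upd) (auto simp: j_def)
  ultimately show ?thesis
    by simp
qed

lemma hard_round_error_ge: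
  assumes "t < T"
  defines "h \<equiv> hard_scale d B"
  shows "real (card (sign_vectors d)) * (2 * h^2) / 3 -
           16 * h^4 * (\<Sum>s\<in>sign_vectors d. \<Sum>b\<in>coin_seqs T. hard_weight s b * hard_queries (t mod d) b)
         \<le> (\<Sum>s\<in>sign_vectors d. \<Sum>b\<in>coin_seqs T. hard_weight s b * (hard_prediction t b - h * s (t mod d))^2)"
proof -
  define j where "j = t mod d"
  define S' where "S' = PiE_dflt ({..<d} - {j}) 0 (\<lambda>_. {-1, 0, 1::real})"
  let ?E = "\<lambda>s g. \<Sum>b\<in>coin_seqs T. hard_weight s b * g b"
  have "j < d"
    using d by (simp add: j_def)
  note split = sum_sign_vectors_split[OF this, folded S'_def]
  have upd_mem: "s'(j := \<sigma>) \<in> sign_vectors d" if "s' \<in> S'" "\<sigma> \<in> {-1, 0, 1}" for s' \<sigma>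
    using that \<open>j < d\<close> sign_vectors_except_subset[of d j] by (intro sign_vectors_upd) (auto simp: S'_def)
  have "real (card (sign_vectors d)) * (2 * h^2) / 3 - 16 * h^4 * (\<Sum>s\<in>sign_vectors d. ?E s (hard_queries j))
      = real (card S') * (2 * h^2) -
        16 * h^4 * (\<Sum>s'\<in>S'. \<Sum>\<sigma>\<in>{-1, 0, 1}. ?E (s'(j := \<sigma>)) (hard_queries j))"
    using split[of "\<lambda>_. 1::real"] split[of "\<lambda>s. ?E s (hard_queries j)"] by simp
  also have "\<dots> = (\<Sum>s'\<in>S'. 2 * h^2 - 16 * h^4 * (\<Sum>\<sigma>\<in>{-1, 0, 1}. ?E (s'(j := \<sigma>)) (hard_queries j)))"
    by (simp add: sum_subtractf sum_distrib_left)
  also have "\<dots> \<le> (\<Sum>s'\<in>S'. 2 * h^2 - 16 * h^4 * ?E (s'(j := 0)) (hard_queries j))"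
  proof (intro sum_mono diff_left_mono mult_left_mono)
    fix s' assume "s' \<in> S'"
    then have "0 \<le> ?E (s'(j := \<sigma>)) (hard_queries j)" if "\<sigma> \<in> {-1, 0, 1}" for \<sigma>
      using hard_weight_nonneg[OF upd_mem[OF _ that]] by (intro sum_nonneg mult_nonneg_nonneg) auto
    then show "?E (s'(j := 0)) (hard_queries j) \<le> (\<Sum>\<sigma>\<in>{-1, 0, 1}. ?E (s'(j := \<sigma>)) (hard_queries j))"
      by simp
  qed simp
  also have "\<dots> \<le> (\<Sum>s'\<in>S'. \<Sum>\<sigma>\<in>{-1, 0, 1}. ?E (s'(j := \<sigma>)) (\<lambda>b. (hard_prediction t b - h * \<sigma>)^2))"
    unfolding h_def j_def using assms(1) sign_vectors_except_subset[of d "t mod d"]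
    by (intro sum_mono hard_coordinate_error_ge) (auto simp: S'_def j_def)
  also have "\<dots> = (\<Sum>s\<in>sign_vectors d. ?E s (\<lambda>b. (hard_prediction t b - h * s j)^2))"
    by (simp add: split)
  finally show ?thesis
    by (simp add: j_def)
qed

lemma hard_queries_total: "(\<Sum>t<T. hard_queries (t mod d) b) \<le> 2 * real T * real B / real d"
proof -
  let ?Q = "queried d q r (basis_inputs d T) (coin_labels b) T"
  have "(\<Sum>t<T. card (?Q \<inter> {u. u mod d = t mod d})) \<le> card ?Q * (T div d + 1)"
    by (rule sum_card_residue_classes_le[OF d queried_subset])
  also have "\<dots> \<le> B * (T div d + 1)"
    using budget unfolding respects_budget_def by (intro mult_right_mono) auto
  finally have "(\<Sum>t<T. card (?Q \<inter> {u. u mod d = t mod d})) * d \<le> B * (T div d + 1) * d"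
    by (rule mult_le_mono1)
  also have "\<dots> \<le> B * (2 * T)"
  proof -
    have "T div d * d \<le> T"
      by (rule div_times_less_eq_dividend)
    with dT have "T div d * d + d \<le> 2 * T"
      by linarith
    then have "(T div d + 1) * d \<le> 2 * T"
      by (simp add: add_mult_distrib)
    then show ?thesis
      unfolding mult.assoc by (rule mult_left_mono) simp
  qed
  finally have count: "(\<Sum>t<T. card (?Q \<inter> {u. u mod d = t mod d})) * d \<le> B * (2 * T)" .
  have "(\<Sum>t<T. hard_queries (t mod d) b) * real d = real ((\<Sum>t<T. card (?Q \<inter> {u. u mod d = t mod d})) * d)"
    by simp
  also have "\<dots> \<le> real (B * (2 * T))"
    using count by (simp only: of_nat_le_iff)
  finally have "(\<Sum>t<T. hard_queries (t mod d) b) * real d \<le> 2 * real T * real B"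
    by (simp add: mult_ac)
  with d show ?thesis
    by (simp add: field_simps)
qed


lemma hard_regret_sum_ge:
  defines "h \<equiv> hard_scale d B"
  shows "real (card (sign_vectors d)) * (h^2 * real T / 3) \<le>
         (\<Sum>s\<in>sign_vectors d. \<Sum>b\<in>coin_seqs T.
            hard_weight s b * (\<Sum>t<T. (hard_prediction t b - h * s (t mod d))^2))"
proof -
  let ?S = "sign_vectors d"
  have swap: "(\<Sum>s\<in>?S. \<Sum>b\<in>coin_seqs T. hard_weight s b * (\<Sum>t<T. X t s b)) =
              (\<Sum>t<T. \<Sum>s\<in>?S. \<Sum>b\<in>coin_seqs T. hard_weight s b * X t s b)" for X
    by (simp add: sum_distrib_left sum.swap[of _ "coin_seqs T" "{..<T}"] sum.swap[of _ ?S "{..<T}"])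
  have "(\<Sum>s\<in>?S. \<Sum>b\<in>coin_seqs T. hard_weight s b * (\<Sum>t<T. hard_queries (t mod d) b))
      \<le> (\<Sum>s\<in>?S. \<Sum>b\<in>coin_seqs T. hard_weight s b * (2 * real T * real B / real d))"
    by (intro sum_mono mult_left_mono hard_queries_total hard_weight_nonneg)
  also have "\<dots> = real (card ?S) * (2 * real T * real B / real d)"
    by (simp only: sum_seq_weight mult_1 flip: sum_distrib_right) simp
  finally have queries: "(\<Sum>t<T. \<Sum>s\<in>?S. \<Sum>b\<in>coin_seqs T. hard_weight s b * hard_queries (t mod d) b)
      \<le> real (card ?S) * (2 * real T * real B / real d)"
    by (simp only: swap)
  have "h^4 = h^2 * h^2"
    by (simp add: power4_eq_xxxx power2_eq_square)
  also have "\<dots> = h^2 * (real d / (96 * real B))"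
    using B by (simp add: h_def hard_scale_sq)
  finally have h4: "h^4 = h^2 * (real d / (96 * real B))" .
  have "real (card ?S) * (h^2 * real T / 3)
      = real T * (real (card ?S) * (2 * h^2) / 3) - 16 * h^4 * (real (card ?S) * (2 * real T * real B / real d))"
    using d B by (simp add: h4 field_simps)
  also have "\<dots> \<le> real T * (real (card ?S) * (2 * h^2) / 3) -
      16 * h^4 * (\<Sum>t<T. \<Sum>s\<in>?S. \<Sum>b\<in>coin_seqs T. hard_weight s b * hard_queries (t mod d) b)"
    using queries by (intro diff_left_mono mult_left_mono) auto
  also have "\<dots> = (\<Sum>t<T. real (card ?S) * (2 * h^2) / 3 -
      16 * h^4 * (\<Sum>s\<in>?S. \<Sum>b\<in>coin_seqs T. hard_weight s b * hard_queries (t mod d) b))"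
    by (simp add: sum_subtractf sum_distrib_left)
  also have "\<dots> \<le> (\<Sum>t<T. \<Sum>s\<in>?S. \<Sum>b\<in>coin_seqs T. hard_weight s b * (hard_prediction t b - h * s (t mod d))^2)"
    unfolding h_def by (intro sum_mono hard_round_error_ge) simp
  finally show ?thesis
    by (simp only: swap)
qed

lemma expected_hard_regret_given_signs:
  assumes s: "s \<in> sign_vectors d"
  defines "\<theta> \<equiv> \<lambda>i. hard_scale d B * s i"
  shows "(\<integral>\<^sup>+\<xi>. ennreal (regret d T p q r \<theta> (basis_inputs d T) \<xi>)
            \<partial>Pi_pmf {..<T} 0 (hard_noise d \<theta> (basis_inputs d T))) =
         ennreal (\<Sum>b\<in>coin_seqs T.
            hard_weight s b * (\<Sum>t<T. (hard_prediction t b - hard_scale d B * s (t mod d))^2))"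
proof -
  define \<mu> where "\<mu> t = ip d \<theta> (basis_inputs d T t)" for t
  define noise where "noise b t = (if t \<in> {..<T} then coin_label (b t) - \<mu> t else 0)" for b t
  have \<mu>: "\<mu> t = hard_scale d B * s (t mod d)" if "t < T" for t
    using d that by (simp add: \<mu>_def \<theta>_def ip_basis_inputs)
  have noise: "Pi_pmf {..<T} 0 (hard_noise d \<theta> (basis_inputs d T)) =
        map_pmf noise (Pi_pmf {..<T} False (\<lambda>t. bernoulli_pmf (1/2 + \<mu> t)))"
    unfolding hard_noise_def coin_noise_def noise_def \<mu>_def by (rule Pi_pmf_map_dependent) simp
  moreover have regret: "regret d T p q r \<theta> (basis_inputs d T) (noise b) =
                 (\<Sum>t<T. (hard_prediction t b - hard_scale d B * s (t mod d))^2)" for b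
  proof -
    have "labels d \<theta> (basis_inputs d T) (noise b) u = coin_labels b u" if "u < T" for u
      using that by (simp add: labels_def noise_def \<mu>_def coin_labels_def)
    then have "prediction d p q r (basis_inputs d T) (labels d \<theta> (basis_inputs d T) (noise b)) t =
               hard_prediction t b" if "t < T" for t
      using that by (intro prediction_prefix) simp
    then show ?thesis
      unfolding regret_def by (intro sum.cong) (simp_all add: \<mu>[symmetric] \<mu>_def)
  qed
  have "seq_weight \<mu> T = hard_weight s"
    by (rule seq_weight_cong) (simp add: \<mu>)
  have "\<bar>\<mu> t\<bar> \<le> 1/2" if "t < T" for t
    using abs_hard_mean_le_half[OF B s] that by (simp add: \<mu>)
  then have "(\<integral>\<^sup>+b. ennreal (\<Sum>t<T. (hard_prediction t b - hard_scale d B * s (t mod d))^2)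
               \<partial>Pi_pmf {..<T} False (\<lambda>t. bernoulli_pmf (1/2 + \<mu> t))) =
             ennreal (\<Sum>b\<in>coin_seqs T. seq_weight \<mu> T b * (\<Sum>t<T. (hard_prediction t b - hard_scale d B * s (t mod d))^2))"
    by (intro nn_integral_Pi_bernoulli) (auto intro: sum_nonneg)
  with noise regret \<open>seq_weight \<mu> T = hard_weight s\<close> show ?thesis
    by simp
qed

lemma expected_hard_regret:
  "(\<integral>\<^sup>+\<omega>. ennreal (regret d T p q r (fst \<omega>) (fst (snd \<omega>)) (snd (snd \<omega>)))
      \<partial>outcome T (hard_instances d T B) (hard_noise d)) =
   ennreal ((\<Sum>s\<in>sign_vectors d. \<Sum>b\<in>coin_seqs T.
      hard_weight s b * (\<Sum>t<T. (hard_prediction t b - hard_scale d B * s (t mod d))^2))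
      / real (card (sign_vectors d)))"
proof -
  let ?S = "sign_vectors d"
  let ?R = "\<lambda>s. \<Sum>b\<in>coin_seqs T. hard_weight s b * (\<Sum>t<T. (hard_prediction t b - hard_scale d B * s (t mod d))^2)"
  have R_nonneg: "0 \<le> ?R s" if "s \<in> ?S" for s
    using that by (intro sum_nonneg mult_nonneg_nonneg hard_weight_nonneg) auto
  let ?\<theta> = "\<lambda>s i. hard_scale d B * s i"
  have "outcome T (hard_instances d T B) (hard_noise d) =
        pmf_of_set ?S \<bind> (\<lambda>s. map_pmf (\<lambda>\<xi>. (?\<theta> s, basis_inputs d T, \<xi>))
                                 (Pi_pmf {..<T} 0 (hard_noise d (?\<theta> s) (basis_inputs d T))))"
    by (simp add: outcome_def hard_instances_def map_pmf_def bind_assoc_pmf bind_return_pmf)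
  then have "(\<integral>\<^sup>+\<omega>. ennreal (regret d T p q r (fst \<omega>) (fst (snd \<omega>)) (snd (snd \<omega>)))
          \<partial>outcome T (hard_instances d T B) (hard_noise d)) = (\<integral>\<^sup>+s. ennreal (?R s) \<partial>pmf_of_set ?S)"
    by (simp, intro nn_integral_cong_AE)
      (auto simp: AE_measure_pmf_iff finite_sign_vectors sign_vectors_nonempty expected_hard_regret_given_signs)
  also have "\<dots> = (\<Sum>s\<in>?S. ennreal (?R s)) / of_nat (card ?S)"
    by (simp add: nn_integral_pmf_of_set finite_sign_vectors sign_vectors_nonempty)
  also have "\<dots> = ennreal (\<Sum>s\<in>?S. ?R s) / ennreal (real (card ?S))"
    using R_nonneg by (simp add: sum_ennreal ennreal_of_nat_eq_real_of_nat)
  also have "\<dots> = ennreal ((\<Sum>s\<in>?S. ?R s) / real (card ?S))"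
  proof (rule divide_ennreal)
    show "0 \<le> (\<Sum>s\<in>?S. ?R s)"
      by (rule sum_nonneg) (rule R_nonneg)
    show "0 < real (card ?S)"
      using finite_sign_vectors sign_vectors_nonempty by (simp add: card_gt_0_iff)
  qed
  finally show ?thesis .
qed

lemma expected_hard_regret_ge:
  "ennreal (1/288 * real d * real T / real B) \<le>
   (\<integral>\<^sup>+\<omega>. ennreal (regret d T p q r (fst \<omega>) (fst (snd \<omega>)) (snd (snd \<omega>)))
      \<partial>outcome T (hard_instances d T B) (hard_noise d))"
proof -
  have card: "0 < real (card (sign_vectors d))"
    using finite_sign_vectors sign_vectors_nonempty by (simp add: card_gt_0_iff)
  have "1/288 * real d * real T / real B = (hard_scale d B)^2 * real T / 3"
    using B by (simp add: hard_scale_sq)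
  also have "\<dots> \<le> (\<Sum>s\<in>sign_vectors d. \<Sum>b\<in>coin_seqs T.
      hard_weight s b * (\<Sum>t<T. (hard_prediction t b - hard_scale d B * s (t mod d))^2))
      / real (card (sign_vectors d))"
    using hard_regret_sum_ge card by (simp add: field_simps)
  finally show ?thesis
    unfolding expected_hard_regret by (rule ennreal_leI)
qed

end

theorem mainTheorem4:
  shows "\<exists>c::real. c > 0 \<and>
    (\<forall>d T B :: nat. 0 < d \<and> 0 < T \<and> 0 < B \<and> d \<le> T \<and> d \<le> B \<longrightarrow>
      (\<exists>P N. valid_adversary d T P N \<and>
        (\<forall>S p q. prob_space S \<and> seed_measurable S p q \<and> respects_budget d T B q \<longrightarrow>
           expected_regret d T P N S p q \<ge> ennreal (c * real d * real T / real B))))"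
proof (intro exI[of _ "1/288"] conjI allI impI)
  fix d T B :: nat
  assume dTB: "0 < d \<and> 0 < T \<and> 0 < B \<and> d \<le> T \<and> d \<le> B"
  show "\<exists>P N. valid_adversary d T P N \<and>
        (\<forall>S p q. prob_space S \<and> seed_measurable S p q \<and> respects_budget d T B q \<longrightarrow>
           expected_regret d T P N S p q \<ge> ennreal (1/288 * real d * real T / real B))"
  proof (intro exI conjI allI impI)
    show "valid_adversary d T (hard_instances d T B) (hard_noise d)"
      using dTB by (intro valid_hard_instances) auto
  next
    fix S p q
    assume learner: "prob_space S \<and> seed_measurable S p q \<and> respects_budget d T B q"
    then interpret prob_space S
      by simp
    have "ennreal (1/288 * real d * real T / real B) = (\<integral>\<^sup>+r. ennreal (1/288 * real d * real T / real B) \<partial>S)"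
      by (simp add: emeasure_space_1)
    also have "\<dots> \<le> expected_regret d T (hard_instances d T B) (hard_noise d) S p q"
      unfolding expected_regret_def using dTB learner by (intro nn_integral_mono expected_hard_regret_ge) auto
    finally show "expected_regret d T (hard_instances d T B) (hard_noise d) S p q \<ge>
        ennreal (1/288 * real d * real T / real B)" .
  qed
qed (simp)

end
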